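(* Let $d\ge2$, let $\mathbf A,\mathbf B\in\overline{\mathbb Q}[t]$ be nonzero coprime polynomials, $\mathbf c=\mathbf A/\mathbf B$, let $\lambda\in\overline{\mathbb Q}^*$ and let $|\cdot|_v$ be an absolute value on $\overline{\mathbb Q}$. Then the limit $\lim_{n\to\infty}\frac{\log M_{n,v}(\lambda)}{d^n}$ exists, and for each $n_0\ge1$, $$\left|\lim_{n\to\infty}\frac{\log M_{n,v}(\lambda)}{d^n}-\frac{\log M_{n_0,v}(\lambda)}{d^{n_0}}\right|\le\frac{\log(2\max\{1,|\lambda|_v\})-\log(\min\{1,|\lambda|_v\})}{d^{n_0}(d-1)}.$$
   Context: The polynomials $\mathbf A_{\mathbf c,n},\mathbf B_{\mathbf c,n}$ are defined by: $\mathbf A_{\mathbf c,0}=\mathbf A$, $\mathbf B_{\mathbf c,0}=\mathbf B$; if $\mathbf A(0)\neq0$ then $\mathbf A_{\mathbf c,1}=\mathbf A^d+t\mathbf B^d$, $\mathbf B_{\mathbf c,1}=\mathbf A\mathbf B^{d-1}$, while if $\mathbf A(0)=0$ then $\mathbf A_{\mathbf c,1}=(\mathbf A^d+t\mathbf B^d)/t$, $\mathbf B_{\mathbf c,1}=\mathbf A\mathbf B^{d-1}/t$; for $n\ge1$, $\mathbf A_{\mathbf c,n+1}=\mathbf A_{\mathbf c,n}^d+t\mathbf B_{\mathbf c,n}^d$, $\mathbf B_{\mathbf c,n+1}=\mathbf A_{\mathbf c,n}\mathbf B_{\mathbf c,n}^{d-1}$. Then $M_{n,v}(\lambda)=\max\{|\mathbf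 A_{\mathbf c,n}(\lambda)|_v,|\mathbf B_{\mathbf c,n}(\lambda)|_v\}$. *)

theory Defs
  imports "HOL-Analysis.Analysis" "HOL-Computational_Algebra.Polynomial"
begin

text \<open>The algebraic closure of Q is modelled as the algebraic complex numbers.\<close>

definition alg_poly :: "complex poly \<Rightarrow> bool" where
  "alg_poly p \<longleftrightarrow> (\<forall>i. algebraic (coeff p i))"

text \<open>An absolute value on the field of algebraic numbers (values off it are irrelevant).\<close>
definition abs_value_alg :: "(complex \<Rightarrow> real) \<Rightarrow> bool" where
  "abs_value_alg v \<longleftrightarrow>
     (\<forall>x. algebraic x \<longrightarrow> v x \<ge> 0) \<and>
     (\<forall>x. algebraic x \<longrightarrow> (v x = 0 \<longleftrightarrow> x = 0)) \<and>
     (\<forall>x y. algebraic x \<longrightarrow> algebraic y \<longrightarrow> v (x * y) = v x * v y) \<and>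
     (\<forall>x y. algebraic x \<longrightarrow> algebraic y \<longrightarrow> v (x + y) \<le> v x + v y)"

fun AB_seq :: "nat \<Rightarrow> complex poly \<Rightarrow> complex poly \<Rightarrow> nat \<Rightarrow> complex poly \<times> complex poly" where
  "AB_seq d A B 0 = (A, B)"
| "AB_seq d A B (Suc 0) =
     (if poly A 0 \<noteq> 0 then (A ^ d + [:0, 1:] * B ^ d, A * B ^ (d - 1))
      else ((A ^ d + [:0, 1:] * B ^ d) div [:0, 1:], (A * B ^ (d - 1)) div [:0, 1:]))"
| "AB_seq d A B (Suc (Suc n)) =
     (let (An, Bn) = AB_seq d A B (Suc n) in (An ^ d + [:0, 1:] * Bn ^ d, An * Bn ^ (d - 1)))"

definition M_nv :: "nat \<Rightarrow> complex poly \<Rightarrow> complex poly \<Rightarrow> (complex \<Rightarrow> real) \<Rightarrow> nat \<Rightarrow> complex \<Rightarrow> real" where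
  "M_nv d A B v n x = max (v (poly (fst (AB_seq d A B n)) x)) (v (poly (snd (AB_seq d A B n)) x))"

end

theory Submission
  imports Defs "HOL-Algebra.Finite_Extensions"
begin

text \<open>
  Let \<open>a n\<close>, \<open>b n\<close> be the values of \<open>A_c_n\<close>, \<open>B_c_n\<close> at \<open>\<lambda>\<close>, let \<open>\<alpha> = v \<lambda>\<close> and
  \<open>M n = max (v (a n)) (v (b n))\<close>. For \<open>n \<ge> 1\<close> we have \<open>a (n+1) = a n ^ d + \<lambda> b n ^ d\<close>
  and \<open>b (n+1) = a n b n ^ (d-1)\<close>, so the triangle inequality gives
  \<open>M (n+1) \<le> 2 max 1 \<alpha> M n ^ d\<close>, and a case distinction on which of \<open>v (a n)\<close>,
  \<open>v (b n)\<close> is larger gives \<open>M (n+1) \<ge> min 1 \<alpha> / (2 max 1 \<alpha>) M n ^ d\<close>.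
  Coprimality of \<open>A\<close> and \<open>B\<close> makes every \<open>M n\<close> positive, hence
  \<open>|ln M (n+1) - d ln M n| \<le> C\<close> with \<open>C\<close> the numerator of the claimed bound.
  So \<open>ln M n / d ^ n\<close> has increments at most \<open>C / d ^ (n+1)\<close>: it converges, and the
  geometric tail gives the estimate. Since \<open>v\<close> is only an absolute value on the algebraic
  numbers, we need that these form a subfield of \<open>\<complex>\<close>.
\<close>

section \<open>The algebraic numbers form a subfield\<close>

definition complex_ring :: "complex ring" where
  "complex_ring = \<lparr>carrier = UNIV, mult = (*), one = 1, zero = 0, add = (+)\<rparr>"

lemma complex_ring_simps [simp]:
  "carrier complex_ring = UNIV" "add complex_ring = (+)" "mult complex_ring = (*)"
  "zero complex_ring = 0" "one complex_ring = 1"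
  by (auto simp: complex_ring_def)

lemma field_complex_ring: "field complex_ring"
proof -
  have "\<exists>y. x + y = 0" for x :: complex
    using add.right_inverse by blast
  moreover have "x \<noteq> 0 \<Longrightarrow> \<exists>y. x * y = 1" for x :: complex
    by (rule exI[of _ "inverse x"]) auto
  ultimately show ?thesis
    unfolding complex_ring_def
    by unfold_locales (auto simp: algebra_simps Units_def)
qed

lemma complex_ring_nat_pow [simp]: "x [^]\<^bsub>complex_ring\<^esub> (n :: nat) = x ^ n"
proof -
  interpret field complex_ring by (rule field_complex_ring)
  show ?thesis
    by (induction n) (auto simp: mult.commute)
qed

lemma complex_ring_a_inv [simp]: "\<ominus>\<^bsub>complex_ring\<^esub> x = - x"
proof -
  interpret field complex_ring by (rule field_complex_ring)
  have "\<ominus>\<^bsub>complex_ring\<^esub> x + x = 0"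
    using l_neg[of x] by simp
  then show ?thesis
    by (simp add: eq_neg_iff_add_eq_0)
qed

lemma complex_ring_m_inv [simp]: "x \<noteq> 0 \<Longrightarrow> inv\<^bsub>complex_ring\<^esub> x = inverse x"
proof -
  interpret field complex_ring by (rule field_complex_ring)
  assume "x \<noteq> 0"
  then show ?thesis
    using inv_unique'[of x "inverse x"] by simp
qed

lemma eval_complex_ring: "ring.eval complex_ring p x = poly (Poly (rev p)) x"
proof -
  interpret field complex_ring by (rule field_complex_ring)
  show ?thesis
    by (induction p) (auto simp: Poly_append poly_monom mult.commute)
qed

lemma subfield_Rats_complex_ring: "subfield \<rat> complex_ring"
proof -
  interpret field complex_ring by (rule field_complex_ring)
  show ?thesis
    by (rule subfieldI'[OF subringI]) auto
qed

lemma algebraic_iff_algebraic_over_Rats: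
  "algebraic (x :: complex) \<longleftrightarrow> (ring.algebraic complex_ring over \<rat>) x"
proof -
  interpret field complex_ring by (rule field_complex_ring)
  show ?thesis
proof
  assume "Polynomial.algebraic x"
  then obtain p where p: "\<forall>i. poly.coeff p i \<in> \<rat>" "p \<noteq> 0" "poly p x = 0"
    using algebraic_altdef by blast
  define P where "P = rev (coeffs p)"
  have "P \<in> carrier (\<rat>[X]\<^bsub>complex_ring\<^esub>)"
    using p by (auto simp: P_def univ_poly_def polynomial_def hd_rev
        last_coeffs_eq_coeff_degree coeffs_def)
  moreover have "P \<noteq> []" "eval P x = 0"
    using p by (simp_all add: P_def eval_complex_ring)
  ultimately show "(algebraic over \<rat>) x"
    using algebraicI[of P] by simp
next
  assume "(algebraic over \<rat>) x"
  then obtain P where P: "P \<in> carrier (\<rat>[X]\<^bsub>complex_ring\<^esub>)" "P \<noteq> []"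
      "eval P x = 0"
    using algebraicE[OF subfieldE(1)[OF subfield_Rats_complex_ring]]
    by auto
  define p where "p = Poly (rev P)"
  have set_P: "set P \<subseteq> \<rat>" and hd_P: "hd P \<noteq> 0"
    using P by (auto simp: univ_poly_def polynomial_def)
  have "p \<noteq> 0"
  proof
    assume "p = 0"
    then obtain n where "rev P = replicate n 0"
      by (auto simp: p_def Poly_eq_0)
    then have "P = replicate n 0"
      by (metis rev_replicate rev_rev_ident)
    with P(2) hd_P show False
      by (cases n) auto
  qed
  moreover have "\<forall>i. poly.coeff p i \<in> \<rat>"
    using set_P by (auto simp: p_def nth_default_def)
      (metis nth_mem length_rev set_rev subsetD)
  moreover have "poly p x = 0"
    using P(3) by (simp add: eval_complex_ring p_def)
  ultimately show "Polynomial.algebraic x"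
    using algebraic_altdef by blast
qed
qed

lemma algebraic_add: "algebraic (x :: complex) \<Longrightarrow> algebraic y \<Longrightarrow> algebraic (x + y)"
  and algebraic_mult: "algebraic (x :: complex) \<Longrightarrow> algebraic y \<Longrightarrow> algebraic (x * y)"
proof -
  interpret field complex_ring by (rule field_complex_ring)
  have "subring {x \<in> carrier complex_ring. (algebraic over \<rat>) x} complex_ring"
    using subfieldE(1)[OF
        subfield_of_algebraics[OF subfield_Rats_complex_ring]] .
  from subringE(6,7)[OF this]
  show "Polynomial.algebraic x \<Longrightarrow> Polynomial.algebraic y \<Longrightarrow> Polynomial.algebraic (x + y)"
    and "Polynomial.algebraic x \<Longrightarrow> Polynomial.algebraic y \<Longrightarrow> Polynomial.algebraic (x * y)"
    by (auto simp: algebraic_iff_algebraic_over_Rats)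
qed

lemma algebraic_power: "algebraic (x :: complex) \<Longrightarrow> algebraic (x ^ n)"
  by (induction n) (auto intro: algebraic_mult)

lemma algebraic_sum: "(\<And>i. i \<in> I \<Longrightarrow> algebraic (f i :: complex)) \<Longrightarrow> algebraic (sum f I)"
  by (induction I rule: infinite_finite_induct) (auto intro: algebraic_add)

lemma algebraic_poly: "alg_poly p \<Longrightarrow> algebraic x \<Longrightarrow> algebraic (poly p x)"
  unfolding poly_altdef alg_poly_def
  by (intro algebraic_sum algebraic_mult algebraic_power) auto

lemma algebraic_divide: "algebraic (x :: complex) \<Longrightarrow> algebraic y \<Longrightarrow> algebraic (x / y)"
  unfolding divide_inverse by (intro algebraic_mult algebraic_inverse)

context
  fixes v :: "complex \<Rightarrow> real"
  assumes v: "abs_value_alg v"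
begin

lemma abs_value_alg_nonneg: "algebraic x \<Longrightarrow> v x \<ge> 0"
  and abs_value_alg_eq_0_iff: "algebraic x \<Longrightarrow> v x = 0 \<longleftrightarrow> x = 0"
  and abs_value_alg_mult: "algebraic x \<Longrightarrow> algebraic y \<Longrightarrow> v (x * y) = v x * v y"
  and abs_value_alg_triangle: "algebraic x \<Longrightarrow> algebraic y \<Longrightarrow> v (x + y) \<le> v x + v y"
  using v unfolding abs_value_alg_def by blast+

lemma abs_value_alg_pos: "algebraic x \<Longrightarrow> x \<noteq> 0 \<Longrightarrow> 0 < v x"
  using abs_value_alg_nonneg abs_value_alg_eq_0_iff by (simp add: less_le)

lemma abs_value_alg_1: "v 1 = 1"
proof -
  have "v 1 * (v 1 - 1) = 0"
    using abs_value_alg_mult[of 1 1] by (simp add: algebra_simps)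
  moreover have "v 1 \<noteq> 0"
    using abs_value_alg_eq_0_iff[of 1] by simp
  ultimately show ?thesis
    by simp
qed

lemma abs_value_alg_power: "algebraic x \<Longrightarrow> v (x ^ n) = v x ^ n"
  by (induction n) (simp_all add: abs_value_alg_1 abs_value_alg_mult algebraic_power)

lemma abs_value_alg_minus: "algebraic x \<Longrightarrow> v (- x) = v x"
proof -
  have alg: "algebraic (- 1 :: complex)"
    by simp
  have "(v (- 1) - 1) * (v (- 1) + 1) = 0"
    using abs_value_alg_mult[OF alg alg] abs_value_alg_1 by (simp add: algebra_simps)
  moreover have "v (- 1) + 1 > 0"
    using abs_value_alg_nonneg[OF alg] by simp
  ultimately have "v (- 1) = 1"
    by simp
  then show "algebraic x \<Longrightarrow> v (- x) = v x"
    using abs_value_alg_mult[OF alg, of x] by simp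
qed

lemma abs_value_alg_triangle_reverse:
  assumes "algebraic x" "algebraic y"
  shows "\<bar>v x - v y\<bar> \<le> v (x + y)"
proof -
  have "v x \<le> v (x + y) + v (- y)" "v y \<le> v (x + y) + v (- x)"
    using abs_value_alg_triangle[of "x + y" "- y"] abs_value_alg_triangle[of "x + y" "- x"]
      assms by (simp_all add: algebraic_add)
  then show ?thesis
    using assms by (simp add: abs_value_alg_minus)
qed

end

section \<open>One step of the recursion\<close>

lemma max_step_upper:
  fixes x y S \<alpha> :: real
  assumes "0 \<le> x" "0 \<le> y" "0 < \<alpha>" "S \<le> x ^ d + \<alpha> * y ^ d" "d \<ge> 1"
  shows "max S (x * y ^ (d - 1)) \<le> 2 * max 1 \<alpha> * max x y ^ d"
proof -
  define M where "M = max x y"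
  have M: "0 \<le> M" "x ^ d \<le> M ^ d" "y ^ d \<le> M ^ d" "y ^ (d - 1) \<le> M ^ (d - 1)"
    using assms by (auto simp: M_def intro!: power_mono)
  have "x * y ^ (d - 1) \<le> M * M ^ (d - 1)"
    using assms M by (intro mult_mono) (auto simp: M_def)
  also have "\<dots> = M ^ d"
    using \<open>d \<ge> 1\<close> by (cases d) auto
  also have "\<dots> \<le> 2 * max 1 \<alpha> * M ^ d"
    using M by (simp add: mult_le_cancel_right1 max_def)
  finally have P: "x * y ^ (d - 1) \<le> 2 * max 1 \<alpha> * M ^ d" .
  have "\<alpha> * y ^ d \<le> \<alpha> * M ^ d"
    using assms(3) M by simp
  then have "S \<le> (1 + \<alpha>) * M ^ d"
    using assms(4) M by (simp add: algebra_simps)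
  also have "\<dots> \<le> 2 * max 1 \<alpha> * M ^ d"
    using M by (intro mult_right_mono) auto
  finally show ?thesis
    using P by (simp add: M_def)
qed

lemma max_step_lower:
  fixes x y S \<alpha> :: real
  assumes "0 \<le> x" "0 \<le> y" "0 < \<alpha>" "\<bar>x ^ d - \<alpha> * y ^ d\<bar> \<le> S" "d \<ge> 1"
  shows "min 1 \<alpha> / (2 * max 1 \<alpha>) * max x y ^ d \<le> max S (x * y ^ (d - 1))"
proof -
  define c where "c = min 1 \<alpha> / (2 * max 1 \<alpha>)"
  have "1 \<le> \<alpha> \<Longrightarrow> 1 \<le> \<alpha> * \<alpha>"
    using mult_mono[of 1 \<alpha> 1 \<alpha>] by simp
  then have c: "0 \<le> c" "c \<le> 1 / 2" "\<alpha> * c \<le> 1 / 2" "2 * c \<le> \<alpha>"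
    using \<open>0 < \<alpha>\<close> by (auto simp: c_def min_def max_def field_simps mult_le_one)
  have split_power: "z ^ d = z * z ^ (d - 1)" for z :: real
    using \<open>d \<ge> 1\<close> by (cases d) auto
  have "c * max x y ^ d \<le> max S (x * y ^ (d - 1))"
  proof (cases "y \<le> x")
    case True
    \<comment> \<open>Either \<open>\<alpha> y\<^sup>d \<le> x\<^sup>d / 2\<close>, and the first entry is large, or \<open>y\<^sup>d\<close>, which is at most
      the second entry, is comparable to \<open>x\<^sup>d\<close>.\<close>
    have y_le: "y ^ d \<le> x * y ^ (d - 1)"
      unfolding split_power[of y] using True assms by (intro mult_right_mono) auto
    have "c * x ^ d \<le> max S (x * y ^ (d - 1))"
    proof (cases "c * x ^ d \<le> x * y ^ (d - 1)")
      case False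
      then have "\<alpha> * y ^ d \<le> \<alpha> * c * x ^ d"
        using y_le assms(3) by (simp add: mult.assoc)
      moreover have "\<alpha> * c * x ^ d \<le> 1 / 2 * x ^ d" "c * x ^ d \<le> 1 / 2 * x ^ d"
        using c assms by (intro mult_right_mono; simp)+
      ultimately show ?thesis
        using assms(4) by (auto simp: abs_le_iff)
    qed simp
    then show ?thesis
      using True by (simp add: max_def)
  next
    case False
    have "x ^ d \<le> x * y ^ (d - 1)"
      unfolding split_power[of x] using False assms by (intro mult_left_mono power_mono) auto
    moreover have "c * y ^ d \<le> (\<alpha> - c) * y ^ d"
      using assms c by (intro mult_right_mono) auto
    ultimately have "c * y ^ d \<le> max S (x * y ^ (d - 1))"
      using assms(4) by (auto simp: abs_le_iff algebra_simps)
    then show ?thesis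
      using False by (simp add: max_def)
  qed
  then show ?thesis
    by (simp only: c_def)
qed

lemma abs_value_alg_step_bounds:
  assumes v: "abs_value_alg v" and alg: "algebraic x" "algebraic y" "algebraic lam"
    and "lam \<noteq> 0" "d \<ge> 1"
  shows "max (v (x ^ d + lam * y ^ d)) (v (x * y ^ (d - 1)))
           \<le> 2 * max 1 (v lam) * max (v x) (v y) ^ d"
    and "min 1 (v lam) / (2 * max 1 (v lam)) * max (v x) (v y) ^ d
           \<le> max (v (x ^ d + lam * y ^ d)) (v (x * y ^ (d - 1)))"
proof -
  have alg': "algebraic (x ^ d)" "algebraic (lam * y ^ d)"
    using alg by (simp_all add: algebraic_mult algebraic_power)
  have v_x: "v (x ^ d) = v x ^ d" and v_lam_y: "v (lam * y ^ d) = v lam * v y ^ d"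
    and v_xy: "v (x * y ^ (d - 1)) = v x * v y ^ (d - 1)"
    using alg by (simp_all add: abs_value_alg_power[OF v] abs_value_alg_mult[OF v] algebraic_power)
  have "v (x ^ d + lam * y ^ d) \<le> v x ^ d + v lam * v y ^ d"
    using abs_value_alg_triangle[OF v alg'] by (simp only: v_x v_lam_y)
  moreover have "\<bar>v x ^ d - v lam * v y ^ d\<bar> \<le> v (x ^ d + lam * y ^ d)"
    using abs_value_alg_triangle_reverse[OF v alg'] by (simp only: v_x v_lam_y)
  moreover have "0 \<le> v x" "0 \<le> v y" "0 < v lam"
    using alg assms(5) abs_value_alg_nonneg[OF v] abs_value_alg_pos[OF v] by auto
  ultimately show "max (v (x ^ d + lam * y ^ d)) (v (x * y ^ (d - 1)))
           \<le> 2 * max 1 (v lam) * max (v x) (v y) ^ d"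
    and "min 1 (v lam) / (2 * max 1 (v lam)) * max (v x) (v y) ^ d
           \<le> max (v (x ^ d + lam * y ^ d)) (v (x * y ^ (d - 1)))"
    unfolding v_xy using max_step_upper max_step_lower \<open>d \<ge> 1\<close> by blast+
qed

section \<open>The values of the iterates at \<open>\<lambda>\<close>\<close>

context
  fixes d :: nat and A B :: "complex poly" and lam :: complex
begin

abbreviation A_val :: "nat \<Rightarrow> complex" where
  "A_val n \<equiv> poly (fst (AB_seq d A B n)) lam"

abbreviation B_val :: "nat \<Rightarrow> complex" where
  "B_val n \<equiv> poly (snd (AB_seq d A B n)) lam"

lemma A_val_Suc_Suc: "A_val (Suc (Suc n)) = A_val (Suc n) ^ d + lam * B_val (Suc n) ^ d"
  and B_val_Suc_Suc: "B_val (Suc (Suc n)) = A_val (Suc n) * B_val (Suc n) ^ (d - 1)"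
  by (simp_all add: case_prod_beta Let_def)

text \<open>The division by \<open>t\<close> in the first step of the recursion scales both values by \<open>1/\<lambda>\<close>.\<close>

lemma AB_val_Suc:
  assumes "d \<ge> 1"
  obtains s where "s = 1 \<or> s = lam"
    and "s * A_val (Suc n) = A_val n ^ d + lam * B_val n ^ d"
    and "s * B_val (Suc n) = A_val n * B_val n ^ (d - 1)"
proof (cases "n = 0 \<and> poly A 0 = 0")
  case False
  show ?thesis
  proof (cases n)
    case 0
    then show ?thesis
      using False that[of 1] by simp
  next
    case (Suc m)
    show ?thesis
      by (intro that[of 1]) (simp_all only: Suc mult_1 A_val_Suc_Suc B_val_Suc_Suc simp_thms)
  qed
next
  case True
  define t where "t = [:0, 1 :: complex:]"
  obtain k where d: "d = Suc k"
    using assms by (cases d) auto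
  obtain A' where A': "A = t * A'"
    using True poly_eq_0_iff_dvd[of A 0] by (auto simp: t_def)
  have factor_t: "A ^ d + t * B ^ d = t * (t ^ k * A' ^ d + B ^ d)"
    "A * B ^ (d - 1) = t * (A' * B ^ (d - 1))"
    by (simp_all add: A' d algebra_simps)
  have "AB_seq d A B 1 = ((A ^ d + t * B ^ d) div t, (A * B ^ (d - 1)) div t)"
    using True by (simp add: t_def)
  also have "\<dots> = (t ^ k * A' ^ d + B ^ d, A' * B ^ (d - 1))"
    using nonzero_mult_div_cancel_left[of t] by (simp only: factor_t) (simp add: t_def)
  finally have "lam * A_val 1 = poly (A ^ d + t * B ^ d) lam"
    and "lam * B_val 1 = poly (A * B ^ (d - 1)) lam"
    by (simp_all only: factor_t) (simp_all add: t_def)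
  then show ?thesis
    using True that[of lam] by (simp add: t_def)
qed

context
  assumes d: "d \<ge> 1" and alg_AB: "alg_poly A" "alg_poly B"
    and alg_lam: "algebraic lam" and lam: "lam \<noteq> 0"
begin

lemma algebraic_AB_val: "algebraic (A_val n) \<and> algebraic (B_val n)"
proof (induction n)
  case 0
  then show ?case
    using alg_AB alg_lam by (simp add: algebraic_poly)
next
  case (Suc n)
  obtain s where s: "s = 1 \<or> s = lam"
    and eqs: "s * A_val (Suc n) = A_val n ^ d + lam * B_val n ^ d"
      "s * B_val (Suc n) = A_val n * B_val n ^ (d - 1)"
    using AB_val_Suc[OF d] .
  have "s \<noteq> 0" "algebraic s"
    using s lam alg_lam by auto
  moreover have "algebraic (s * A_val (Suc n))" "algebraic (s * B_val (Suc n))"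
    unfolding eqs using Suc alg_lam by (simp_all add: algebraic_add algebraic_mult algebraic_power)
  ultimately show ?case
    using algebraic_divide[of "s * _" s] by (metis nonzero_mult_div_cancel_left)
qed

context
  fixes v :: "complex \<Rightarrow> real"
  assumes v: "abs_value_alg v"
begin

lemma M_nv_pos:
  assumes "coprime A B"
  shows "0 < M_nv d A B v n lam"
proof (induction n)
  case 0
  have "A_val 0 \<noteq> 0 \<or> B_val 0 \<noteq> 0"
  proof (rule ccontr)
    assume "\<not> ?thesis"
    then have "[:- lam, 1:] dvd A" "[:- lam, 1:] dvd B"
      by (simp_all add: poly_eq_0_iff_dvd)
    then have "is_unit [:- lam, 1:]"
      using \<open>coprime A B\<close> coprime_common_divisor by blast
    then show False
      by (simp add: is_unit_iff_degree)
  qed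
  then show ?case
    using algebraic_AB_val[of 0] abs_value_alg_pos[OF v] by (auto simp: M_nv_def less_max_iff_disj)
next
  case (Suc n)
  obtain s where s: "s = 1 \<or> s = lam"
    and eqs: "s * A_val (Suc n) = A_val n ^ d + lam * B_val n ^ d"
      "s * B_val (Suc n) = A_val n * B_val n ^ (d - 1)"
    using AB_val_Suc[OF d] .
  have alg: "algebraic (A_val n)" "algebraic (B_val n)"
    "algebraic (A_val (Suc n))" "algebraic (B_val (Suc n))" "algebraic s"
    using algebraic_AB_val s alg_lam by auto
  have pos: "0 < v lam" "0 < v s"
    using s lam alg_lam abs_value_alg_pos[OF v] by auto
  have "0 < min 1 (v lam) / (2 * max 1 (v lam)) * M_nv d A B v n lam ^ d"
    using Suc pos by simp
  also have "\<dots> \<le> max (v (s * A_val (Suc n))) (v (s * B_val (Suc n)))"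
    unfolding eqs M_nv_def by (rule abs_value_alg_step_bounds(2)[OF v alg(1,2) alg_lam lam d])
  also have "\<dots> = v s * M_nv d A B v (Suc n) lam"
    using pos alg by (simp add: M_nv_def abs_value_alg_mult[OF v] max_mult_distrib_left)
  finally show ?case
    using pos by (simp add: zero_less_mult_iff)
qed

lemma ln_M_nv_step:
  assumes "coprime A B"
  shows "\<bar>ln (M_nv d A B v (Suc (Suc n)) lam) - d * ln (M_nv d A B v (Suc n) lam)\<bar>
           \<le> ln (2 * max 1 (v lam)) - ln (min 1 (v lam))"
proof -
  define M where "M k = M_nv d A B v k lam" for k
  define K where "K = 2 * max 1 (v lam)"
  have M_pos: "0 < M k" for k
    using M_nv_pos[OF assms] by (simp add: M_def)
  have v_lam: "0 < v lam"
    using alg_lam lam by (rule abs_value_alg_pos[OF v])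
  have K: "0 < K" "0 < min 1 (v lam) / K"
    using v_lam by (auto simp: K_def)
  have M_Suc: "M (Suc n) = max (v (A_val (Suc n))) (v (B_val (Suc n)))"
    by (simp only: M_def M_nv_def)
  have M_Suc_Suc: "M (Suc (Suc n)) = max (v (A_val (Suc n) ^ d + lam * B_val (Suc n) ^ d))
      (v (A_val (Suc n) * B_val (Suc n) ^ (d - 1)))"
    by (simp only: M_def M_nv_def A_val_Suc_Suc B_val_Suc_Suc)
  have alg: "algebraic (A_val (Suc n))" "algebraic (B_val (Suc n))"
    using algebraic_AB_val by blast+
  have bounds: "min 1 (v lam) / K * M (Suc n) ^ d \<le> M (Suc (Suc n))"
      "M (Suc (Suc n)) \<le> K * M (Suc n) ^ d"
    unfolding M_Suc M_Suc_Suc K_def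
    by (fact abs_value_alg_step_bounds[OF v alg alg_lam lam d])+
  have "0 < min 1 (v lam) / K * M (Suc n) ^ d"
    by (intro mult_pos_pos zero_less_power K(2) M_pos)
  then have "ln (min 1 (v lam) / K * M (Suc n) ^ d) \<le> ln (M (Suc (Suc n)))"
    using bounds(1) M_pos by (simp only: ln_le_cancel_iff)
  moreover have "ln (M (Suc (Suc n))) \<le> ln (K * M (Suc n) ^ d)"
    using bounds(2) M_pos K by simp
  moreover have "ln (min 1 (v lam) / K * M (Suc n) ^ d)
      = ln (min 1 (v lam)) - ln K + d * ln (M (Suc n))"
    using v_lam K M_pos[of "Suc n"] by (simp add: ln_mult ln_div ln_realpow less_imp_neq[symmetric])
  moreover have "ln (K * M (Suc n) ^ d) = ln K + d * ln (M (Suc n))"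
    using K M_pos[of "Suc n"] by (simp add: ln_mult ln_realpow)
  moreover have "ln (min 1 (v lam)) \<le> 0"
    using v_lam by (simp add: min_def)
  ultimately have "\<bar>ln (M (Suc (Suc n))) - d * ln (M (Suc n))\<bar> \<le> ln K - ln (min 1 (v lam))"
    by (simp only: abs_le_iff) linarith
  then show ?thesis
    by (simp only: M_def K_def)
qed

end

end

end

section \<open>Sequences with geometrically small increments\<close>

lemma LIMSEQ_geometric_increments:
  fixes w :: "nat \<Rightarrow> real"
  assumes incr: "\<And>k. \<bar>w (Suc k) - w k\<bar> \<le> B * q ^ k" and q: "0 \<le> q" "q < 1"
  shows "\<exists>L. w \<longlonglongrightarrow> L \<and> (\<forall>n. \<bar>L - w n\<bar> \<le> B * q ^ n / (1 - q))"
proof -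
  define \<delta> where "\<delta> k = w (Suc k) - w k" for k
  have summable_geo: "summable (\<lambda>k. B * q ^ k)"
    using q by (intro summable_mult summable_geometric) auto
  have summable_\<delta>: "summable \<delta>"
    by (rule summable_comparison_test'[OF summable_geo, of 0]) (use incr in \<open>simp add: \<delta>_def\<close>)
  have telescope: "w n = w 0 + (\<Sum>k<n. \<delta> k)" for n
    by (induction n) (auto simp: \<delta>_def)
  define L where "L = w 0 + suminf \<delta>"
  have "(\<lambda>n. w 0 + (\<Sum>k<n. \<delta> k)) \<longlonglongrightarrow> L"
    unfolding L_def by (intro tendsto_add tendsto_const summable_LIMSEQ summable_\<delta>)
  then have "w \<longlonglongrightarrow> L"
    by (simp only: telescope[symmetric])
  moreover have "\<bar>L - w n\<bar> \<le> B * q ^ n / (1 - q)" for n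
  proof -
    have tail: "L - w n = (\<Sum>i. \<delta> (i + n))"
      using suminf_split_initial_segment[OF summable_\<delta>, of n] by (simp add: L_def telescope[of n])
    have summable_tail: "summable (\<lambda>i. \<delta> (i + n))" "summable (\<lambda>i. B * q ^ (i + n))"
      using summable_\<delta> summable_geo by simp_all
    have "(\<Sum>i. B * q ^ (i + n)) = (\<Sum>i. (B * q ^ n) * q ^ i)"
      by (simp add: power_add mult_ac)
    also have "\<dots> = B * q ^ n / (1 - q)"
      using q by (simp add: suminf_mult suminf_geometric summable_geometric)
    finally have geo_tail: "(\<Sum>i. B * q ^ (i + n)) = B * q ^ n / (1 - q)" .
    have "(\<Sum>i. \<delta> (i + n)) \<le> (\<Sum>i. B * q ^ (i + n))"
      by (rule suminf_le[OF _ summable_tail]) (use incr in \<open>auto simp: \<delta>_def abs_le_iff\<close>)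
    moreover have "- (\<Sum>i. \<delta> (i + n)) \<le> (\<Sum>i. B * q ^ (i + n))"
      unfolding suminf_minus[OF summable_tail(1), symmetric]
      by (rule suminf_le[OF _ summable_minus[OF summable_tail(1)] summable_tail(2)])
        (use incr in \<open>auto simp: \<delta>_def abs_le_iff\<close>)
    ultimately show ?thesis
      by (simp add: tail geo_tail abs_le_iff)
  qed
  ultimately show ?thesis
    by blast
qed

lemma LIMSEQ_divide_power_bounded_defect:
  fixes m :: "nat \<Rightarrow> real" and d C :: real
  assumes "d > 1" and defect: "\<And>n. n \<ge> 1 \<Longrightarrow> \<bar>m (Suc n) - d * m n\<bar> \<le> C"
  shows "\<exists>L. (\<lambda>n. m n / d ^ n) \<longlonglongrightarrow> L \<and>
    (\<forall>n\<ge>1. \<bar>L - m n / d ^ n\<bar> \<le> C / (d ^ n * (d - 1)))"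
proof -
  define u where "u n = m n / d ^ n" for n
  have incr: "\<bar>u (Suc (Suc k)) - u (Suc k)\<bar> \<le> C / d ^ 2 * (1 / d) ^ k" for k
  proof -
    have "u (Suc (Suc k)) - u (Suc k) = (m (Suc (Suc k)) - d * m (Suc k)) / d ^ Suc (Suc k)"
      using \<open>d > 1\<close> by (simp add: u_def field_simps)
    also have "\<bar>\<dots>\<bar> \<le> C / d ^ Suc (Suc k)"
      using defect[of "Suc k"] \<open>d > 1\<close> by (simp add: divide_right_mono)
    also have "\<dots> = C / d ^ 2 * (1 / d) ^ k"
      by (simp add: field_simps power2_eq_square)
    finally show ?thesis .
  qed
  have "\<exists>L. (\<lambda>k. u (Suc k)) \<longlonglongrightarrow> L \<and>
      (\<forall>k. \<bar>L - u (Suc k)\<bar> \<le> C / d ^ 2 * (1 / d) ^ k / (1 - 1 / d))"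
    by (rule LIMSEQ_geometric_increments) (use incr \<open>d > 1\<close> in auto)
  then obtain L where L: "(\<lambda>k. u (Suc k)) \<longlonglongrightarrow> L"
    "\<And>k. \<bar>L - u (Suc k)\<bar> \<le> C / d ^ 2 * (1 / d) ^ k / (1 - 1 / d)"
    by blast
  have "\<bar>L - u n\<bar> \<le> C / (d ^ n * (d - 1))" if "n \<ge> 1" for n
  proof -
    obtain k where k: "n = Suc k"
      using \<open>n \<ge> 1\<close> by (cases n) auto
    have "C / d ^ 2 * (1 / d) ^ k / (1 - 1 / d) = C / (d ^ n * (d - 1))"
      using \<open>d > 1\<close> by (simp add: k field_simps power2_eq_square)
    then show ?thesis
      using L(2)[of k] k by simp
  qed
  moreover have "u \<longlonglongrightarrow> L"
    using L(1) by (simp add: filterlim_sequentially_Suc)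
  ultimately show ?thesis
    unfolding u_def by blast
qed

theorem corollary5p3:
  fixes d :: nat and A B :: "complex poly" and lam :: complex and v :: "complex \<Rightarrow> real"
  assumes "d \<ge> 2"
    and "alg_poly A" and "alg_poly B" and "A \<noteq> 0" and "B \<noteq> 0" and "coprime A B"
    and "algebraic lam" and "lam \<noteq> 0"
    and "abs_value_alg v"
  shows "\<exists>L. (\<lambda>n. ln (M_nv d A B v n lam) / real d ^ n) \<longlonglongrightarrow> L \<and>
    (\<forall>n0\<ge>1. \<bar>L - ln (M_nv d A B v n0 lam) / real d ^ n0\<bar>
       \<le> (ln (2 * max 1 (v lam)) - ln (min 1 (v lam))) / (real d ^ n0 * (real d - 1)))"
proof (rule LIMSEQ_divide_power_bounded_defect)
  show "real d > 1"
    using \<open>d \<ge> 2\<close> by simp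
  fix n :: nat
  assume "n \<ge> 1"
  then obtain k where "n = Suc k"
    by (cases n) auto
  then show "\<bar>ln (M_nv d A B v (Suc n) lam) - real d * ln (M_nv d A B v n lam)\<bar>
      \<le> ln (2 * max 1 (v lam)) - ln (min 1 (v lam))"
    using ln_M_nv_step[of d A B lam v k] assms by simp
qed

end
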